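(* Let $Q=(q_1,\dots,q_n)$ with $q_i\in\mathbb C\setminus\{0,1\}$, and let $\Lambda=(\lambda_{ij})$ be an $n\times n$ matrix over $\mathbb C\setminus\{0\}$ with $\lambda_{ii}=1$, $\lambda_{ij}=\lambda_{ji}^{-1}$. Let $G(Q,\Lambda)$ be the multiplicative subgroup of $\mathbb C^\times$ generated by all $q_i$ and $\lambda_{ij}$, and assume it is torsion free, hence free abelian of finite rank $r$. Fix a basis $\eta_1,\dots,\eta_r$ of $G(Q,\Lambda)$, a $\mathbb Q$-linearly independent subset $\{\mu_1,\dots,\mu_r\}$ of $\mathbb C$, and $q\in\mathbb C\setminus\{0,1\}$ not a root of unity. For each $i$ let $e_i\in\mathbb C[t]$ be the unique polynomial of degree at most $2$ with $e_i(q)=\eta_i$, $e_i(1)=1$, $e_i'(1)=\mu_i$. Let $\mathbf K$ be the set of $\lambda\in\mathbb C\setminus\{0,1\}$ such that $e_i(\lambda)\ne0$ for all $i$ and the multiplicative subgroup $\langle e_1(\lambda),\dots,e_r(\lambda)\rangle$ of $\mathbb C^\times$ is free abelian with basis $e_1(\lambda),\dots,e_r(\lambda)$. Then $\mathbf K$ is an infinite subset of $\mathbb C\setminus\{0,1\}$ and $q\in\mathbf K$.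
   Context: $e_i'$ denotes the formal derivative of $e_i$. *)

theory Defs
  imports Complex_Main "HOL-Computational_Algebra.Polynomial"
begin

text \<open>Multiplicative subgroup of the nonzero complex numbers generated by a set S
  (S is always assumed to consist of nonzero numbers): the smallest set containing S
  and 1 and closed under products and inverses.\<close>
definition gen_subgroup :: "complex set \<Rightarrow> complex set" where
  "gen_subgroup S = \<Inter> {H. S \<subseteq> H \<and> 1 \<in> H \<and> (\<forall>x\<in>H. \<forall>y\<in>H. x * y \<in> H)
                          \<and> (\<forall>x\<in>H. inverse x \<in> H)}"

definition torsion_free :: "complex set \<Rightarrow> bool" where
  "torsion_free H \<longleftrightarrow> (\<forall>g\<in>H. \<forall>k::nat. k > 0 \<longrightarrow> g ^ k = 1 \<longrightarrow> g = 1)"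

definition free_basis :: "nat \<Rightarrow> (nat \<Rightarrow> complex) \<Rightarrow> complex set \<Rightarrow> bool" where
  "free_basis r eta H \<longleftrightarrow>
     (\<forall>i<r. eta i \<noteq> 0 \<and> eta i \<in> H) \<and>
     H = gen_subgroup (eta ` {..<r}) \<and>
     (\<forall>a::nat \<Rightarrow> int. (\<Prod>i<r. eta i powi a i) = 1 \<longrightarrow> (\<forall>i<r. a i = 0))"

end

theory Submission
  imports Defs "HOL-Analysis.Continuum_Not_Denumerable"
begin

text \<open>Call a point l bad if the values e_i(l) satisfy a nontrivial relation
  prod e_i(l)^a_i = 1. Clearing denominators, l is a root of the polynomial
  prod e_i^(a_i+) - prod e_i^(a_i-), which is nonzero: since all e_i(1) = 1, the derivatives at 1
  of the two products are sum a_i+ mu_i and sum a_i- mu_i, and these differ by sum a_i mu_i, which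
  is nonzero by the independence of the mu_i. So the bad points and the roots of the e_i form a
  countable set, whose complement in the uncountable set of complex numbers lies in K.
  Finally, q lies in K because the eta_i = e_i(q) form a basis.\<close>

lemma poly_pderiv_prod_powers_at_unit:
  fixes f :: "'b \<Rightarrow> 'a::idom poly"
  assumes "finite I" and unit: "\<And>i. i \<in> I \<Longrightarrow> poly (f i) x = 1"
  shows "poly (pderiv (\<Prod>i\<in>I. f i ^ k i)) x = (\<Sum>i\<in>I. of_nat (k i) * poly (pderiv (f i)) x)"
proof -
  have "poly (\<Prod>j\<in>I - {i}. f j ^ k j) x = 1" for i
    using unit by (simp add: poly_prod)
  then show ?thesis
    using unit by (simp add: pderiv_prod poly_sum pderiv_power)
qed

lemma prod_powers_neq_if_pderiv_independent:
  fixes e :: "nat \<Rightarrow> 'a::field_char_0 poly"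
  assumes unit: "\<And>i. i < r \<Longrightarrow> poly (e i) x = 1"
    and indep: "\<forall>c::nat \<Rightarrow> rat. (\<Sum>i<r. of_rat (c i) * poly (pderiv (e i)) x) = 0 \<longrightarrow> (\<forall>i<r. c i = 0)"
    and "j < r" "a j \<noteq> 0"
  shows "(\<Prod>i<r. e i ^ nat (a i)) \<noteq> (\<Prod>i<r. e i ^ nat (- a i))"
proof
  assume eq: "(\<Prod>i<r. e i ^ nat (a i)) = (\<Prod>i<r. e i ^ nat (- a i))"
  have deriv: "poly (pderiv (\<Prod>i<r. e i ^ k i)) x = (\<Sum>i<r. of_nat (k i) * poly (pderiv (e i)) x)" for k
    using unit by (intro poly_pderiv_prod_powers_at_unit) auto
  have derivs_eq: "(\<Sum>i<r. of_nat (nat (a i)) * poly (pderiv (e i)) x)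
      = (\<Sum>i<r. of_nat (nat (- a i)) * poly (pderiv (e i)) x)"
    using deriv[of "\<lambda>i. nat (a i)"] deriv[of "\<lambda>i. nat (- a i)"] eq by simp
  have "of_int (a i) = (of_nat (nat (a i)) - of_nat (nat (- a i)) :: 'a)" for i
    by (cases "a i \<ge> 0") auto
  then have "(\<Sum>i<r. of_rat (of_int (a i)) * poly (pderiv (e i)) x)
      = (\<Sum>i<r. of_nat (nat (a i)) * poly (pderiv (e i)) x)
        - (\<Sum>i<r. of_nat (nat (- a i)) * poly (pderiv (e i)) x)"
    by (simp add: left_diff_distrib sum_subtractf)
  also have "\<dots> = 0"
    using derivs_eq by simp
  finally have "(\<Sum>i<r. of_rat (of_int (a i)) * poly (pderiv (e i)) x) = 0" .
  with indep \<open>j < r\<close> \<open>a j \<noteq> 0\<close> show False by fastforce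
qed

definition mult_independent :: "nat \<Rightarrow> (nat \<Rightarrow> 'a::field) \<Rightarrow> bool" where
  "mult_independent r x \<longleftrightarrow> (\<forall>a::nat \<Rightarrow> int. (\<Prod>i<r. x i powi a i) = 1 \<longrightarrow> (\<forall>i<r. a i = 0))"

lemma prod_power_int_eq_1_iff:
  fixes x :: "'b \<Rightarrow> 'a::field"
  assumes "\<And>i. i \<in> I \<Longrightarrow> x i \<noteq> 0"
  shows "(\<Prod>i\<in>I. x i powi a i) = 1 \<longleftrightarrow> (\<Prod>i\<in>I. x i ^ nat (a i)) = (\<Prod>i\<in>I. x i ^ nat (- a i))"
proof -
  have "x i powi a i = x i ^ nat (a i) / x i ^ nat (- a i)" if "i \<in> I" for i
    by (cases "a i \<ge> 0") (auto simp: power_int_def power_inverse divide_inverse)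
  then have "(\<Prod>i\<in>I. x i powi a i) = (\<Prod>i\<in>I. x i ^ nat (a i)) / (\<Prod>i\<in>I. x i ^ nat (- a i))"
    by (simp add: prod_dividef)
  moreover have "(\<Prod>i\<in>I. x i ^ nat (- a i)) \<noteq> 0"
    using assms by (cases "finite I") (auto simp: prod_zero_iff)
  ultimately show ?thesis by simp
qed

lemma countable_vectors_supported_below:
  "countable {a :: nat \<Rightarrow> int. \<forall>i\<ge>r. a i = 0}"
proof (rule countable_subset)
  show "{a :: nat \<Rightarrow> int. \<forall>i\<ge>r. a i = 0} \<subseteq> range (\<lambda>xs i. if i < length xs then xs ! i else 0)"
  proof
    fix a :: "nat \<Rightarrow> int" assume "a \<in> {a. \<forall>i\<ge>r. a i = 0}"
    then have "a = (\<lambda>i. if i < length (map a [0..<r]) then map a [0..<r] ! i else 0)"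
      by (auto simp: fun_eq_iff)
    then show "a \<in> range (\<lambda>xs i. if i < length xs then xs ! i else 0)" by blast
  qed
qed simp

lemma countable_dependent_values:
  fixes e :: "nat \<Rightarrow> 'a::field_char_0 poly"
  assumes unit: "\<And>i. i < r \<Longrightarrow> poly (e i) x = 1"
    and indep: "\<forall>c::nat \<Rightarrow> rat. (\<Sum>i<r. of_rat (c i) * poly (pderiv (e i)) x) = 0 \<longrightarrow> (\<forall>i<r. c i = 0)"
  shows "countable {l. (\<forall>i<r. poly (e i) l \<noteq> 0) \<and> \<not> mult_independent r (\<lambda>i. poly (e i) l)}"
proof -
  define P where "P a = (\<Prod>i<r. e i ^ nat (a i)) - (\<Prod>i<r. e i ^ nat (- a i))" for a :: "nat \<Rightarrow> int"
  define A where "A = {a :: nat \<Rightarrow> int. (\<forall>i\<ge>r. a i = 0) \<and> (\<exists>i<r. a i \<noteq> 0)}"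
  have "{l. (\<forall>i<r. poly (e i) l \<noteq> 0) \<and> \<not> mult_independent r (\<lambda>i. poly (e i) l)}
        \<subseteq> (\<Union>a\<in>A. {l. poly (P a) l = 0})"
  proof safe
    fix l assume nz: "\<forall>i<r. poly (e i) l \<noteq> 0" and "\<not> mult_independent r (\<lambda>i. poly (e i) l)"
    then obtain a j where rel: "(\<Prod>i<r. poly (e i) l powi a i) = 1" and "j < r" "a j \<noteq> 0"
      unfolding mult_independent_def by blast
    define a' where "a' i = (if i < r then a i else 0)" for i
    have "(\<Prod>i<r. poly (e i) l ^ nat (a i)) = (\<Prod>i<r. poly (e i) l ^ nat (- a i))"
      using rel nz prod_power_int_eq_1_iff[of "{..<r}" "\<lambda>i. poly (e i) l" a] by simp
    then have "poly (P a') l = 0"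
      by (simp add: P_def a'_def poly_prod)
    moreover have "a' \<in> A"
      using \<open>j < r\<close> \<open>a j \<noteq> 0\<close> by (auto simp: A_def a'_def)
    ultimately show "l \<in> (\<Union>a\<in>A. {l. poly (P a) l = 0})" by blast
  qed
  moreover have "P a \<noteq> 0" if "a \<in> A" for a
    using that prod_powers_neq_if_pderiv_independent[OF unit indep] by (auto simp: A_def P_def)
  then have "countable (\<Union>a\<in>A. {l. poly (P a) l = 0})"
    using countable_vectors_supported_below[of r]
    by (intro countable_UN) (auto simp: A_def intro: countable_subset countable_finite poly_roots_finite)
  ultimately show ?thesis by (rule countable_subset)
qed

lemma free_basis_gen_subgroupI:
  assumes "\<forall>i<r. x i \<noteq> 0" and "mult_independent r x"
  shows "free_basis r x (gen_subgroup (x ` {..<r}))"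
  using assms unfolding free_basis_def mult_independent_def gen_subgroup_def by blast

theorem lemma2p5:
  fixes n r :: nat
    and Q :: "nat \<Rightarrow> complex"
    and Lam :: "nat \<Rightarrow> nat \<Rightarrow> complex"
    and eta mu :: "nat \<Rightarrow> complex"
    and q :: complex
    and e :: "nat \<Rightarrow> complex poly"
  assumes Q: "\<forall>i<n. Q i \<notin> {0, 1}"
    and Lam_nz: "\<forall>i<n. \<forall>j<n. Lam i j \<noteq> 0"
    and Lam_diag: "\<forall>i<n. Lam i i = 1"
    and Lam_inv: "\<forall>i<n. \<forall>j<n. Lam i j = inverse (Lam j i)"
    and tf: "torsion_free (gen_subgroup ({Q i |i. i < n} \<union> {Lam i j |i j. i < n \<and> j < n}))"
    and basis: "free_basis r eta (gen_subgroup ({Q i |i. i < n} \<union> {Lam i j |i j. i < n \<and> j < n}))"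
    and mu_indep: "\<forall>c::nat \<Rightarrow> rat. (\<Sum>i<r. of_rat (c i) * mu i) = 0 \<longrightarrow> (\<forall>i<r. c i = 0)"
    and q: "q \<notin> {0, 1}"
    and q_nonroot: "\<forall>k::nat. k > 0 \<longrightarrow> q ^ k \<noteq> 1"
    and e_deg: "\<forall>i<r. degree (e i) \<le> 2"
    and e_q: "\<forall>i<r. poly (e i) q = eta i"
    and e_1: "\<forall>i<r. poly (e i) 1 = 1"
    and e_d1: "\<forall>i<r. poly (pderiv (e i)) 1 = mu i"
  defines "K \<equiv> {l. l \<notin> {0, 1} \<and> (\<forall>i<r. poly (e i) l \<noteq> 0) \<and>
                 free_basis r (\<lambda>i. poly (e i) l) (gen_subgroup ((\<lambda>i. poly (e i) l) ` {..<r}))}"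
  shows "infinite K \<and> K \<subseteq> - {0, 1} \<and> q \<in> K"
proof -
  have e_nonzero: "e i \<noteq> 0" if "i < r" for i
    using e_1 that by auto
  let ?Z = "\<Union>i<r. {l. poly (e i) l = 0}"
  let ?D = "{l. (\<forall>i<r. poly (e i) l \<noteq> 0) \<and> \<not> mult_independent r (\<lambda>i. poly (e i) l)}"
  have "countable ?Z"
    using e_nonzero by (auto intro!: countable_UN countable_finite poly_roots_finite)
  moreover have "countable ?D"
    using e_1 e_d1 mu_indep by (intro countable_dependent_values) auto
  ultimately have "uncountable (UNIV - {0, 1} - ?Z - ?D)"
    by (intro uncountable_minus_countable uncountable_UNIV_complex) auto
  moreover have "UNIV - {0, 1} - ?Z - ?D \<subseteq> K"
    unfolding K_def by (auto intro: free_basis_gen_subgroupI)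
  ultimately have "infinite K"
    using countable_finite countable_subset by blast
  moreover have "q \<in> K"
  proof -
    have "\<forall>i<r. poly (e i) q \<noteq> 0" and "mult_independent r (\<lambda>i. poly (e i) q)"
      using basis e_q by (simp_all add: free_basis_def mult_independent_def)
    then show ?thesis
      using q unfolding K_def by (simp add: free_basis_gen_subgroupI)
  qed
  ultimately show ?thesis
    unfolding K_def by auto
qed

end
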